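(* Let $H^*$ be a $k$-factor on $[n]$ and $G\supseteq H^*$ a simple graph on $[n]$. If a planted edge $e\in H^*$ belongs to an alternating circuit in $G$, then $e$ belongs to the core $C_n$ produced by the iterative pruning algorithm run on $G$.
   Context: A $k$-factor on $[n]$ is a $k$-regular simple graph with vertex set $[n]$, identified with its edge set. Edges of $H^*$ are planted (red), edges of $G$ not in $H^*$ are unplanted (blue). An alternating circuit is a closed walk in $G$ with pairwise distinct edges (vertices may repeat) whose edges alternate between planted and unplanted, including between the last and the first edge. Iterative pruning algorithm: assign each vertex $i$ capacity $\kappa_i=k$. Repeat as long as possible: pick a vertex $v$ of the current graph whose current degree equals its current capacity; declare all edges incident to $v$ planted, delete $v$ and its incident edges, and decrease by one the capacity of the other endpoint of each deleted edge; then every vertex whose capacity has dropped to $0$ is deleted together with all its incident edges. The procedure stops when every remaining vertex has degree strictly larger than its capacity. The core $C_n$ is the remaining graph at termination. *)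

theory Defs
  imports Main
begin

definition simple_graph_on :: "nat \<Rightarrow> nat set set \<Rightarrow> bool" where
  "simple_graph_on n E \<longleftrightarrow> (\<forall>e\<in>E. \<exists>u v. e = {u, v} \<and> u \<noteq> v \<and> u \<in> {1..n} \<and> v \<in> {1..n})"

definition k_factor :: "nat \<Rightarrow> nat \<Rightarrow> nat set set \<Rightarrow> bool" where
  "k_factor n k H \<longleftrightarrow> simple_graph_on n H \<and> (\<forall>v\<in>{1..n}. card {e\<in>H. v \<in> e} = k)"

text \<open>Edges traversed by a closed walk given by its cyclic vertex list xs:
  the i-th edge joins xs!i and xs!((i+1) mod length xs).\<close>

definition walk_edge :: "nat list \<Rightarrow> nat \<Rightarrow> nat set" where
  "walk_edge xs i = {xs ! i, xs ! (Suc i mod length xs)}"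

definition alternating_circuit :: "nat set set \<Rightarrow> nat set set \<Rightarrow> nat list \<Rightarrow> bool" where
  "alternating_circuit G H xs \<longleftrightarrow>
     xs \<noteq> [] \<and>
     (\<forall>i<length xs. walk_edge xs i \<in> G) \<and>
     inj_on (walk_edge xs) {..<length xs} \<and>
     (\<forall>i<length xs. walk_edge xs i \<in> H \<longleftrightarrow> walk_edge xs (Suc i mod length xs) \<notin> H)"

text \<open>Pruning algorithm. A state is (remaining vertex set V, capacity function).
  The current graph is G restricted to V (edges are only ever removed
  together with an endpoint).\<close>

definition cur_deg :: "nat set set \<Rightarrow> nat set \<Rightarrow> nat \<Rightarrow> nat" where
  "cur_deg G V v = card {u\<in>V. {v, u} \<in> G}"

inductive prune_step :: "nat set set \<Rightarrow> nat set \<times> (nat \<Rightarrow> nat) \<Rightarrow> nat set \<times> (nat \<Rightarrow> nat) \<Rightarrow> bool"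
  for G where
  "\<lbrakk> v \<in> V; cur_deg G V v = cap v;
     cap' = (\<lambda>u. if u \<in> V - {v} \<and> {v, u} \<in> G then cap u - 1 else cap u);
     V' = (V - {v}) - {u\<in>V - {v}. {v, u} \<in> G \<and> cap' u = 0} \<rbrakk>
   \<Longrightarrow> prune_step G (V, cap) (V', cap')"

definition prune_terminal :: "nat set set \<Rightarrow> nat set \<times> (nat \<Rightarrow> nat) \<Rightarrow> bool" where
  "prune_terminal G S \<longleftrightarrow> (\<forall>v\<in>fst S. cur_deg G (fst S) v \<noteq> snd S v)"

definition core_edges :: "nat set set \<Rightarrow> nat set \<Rightarrow> nat set set" where
  "core_edges G V = {e\<in>G. e \<subseteq> V}"

end

theory Submission
  imports Defs
begin

text \<open>Along any run of the pruning algorithm, the capacity of every remaining vertex equals its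
  number of planted neighbours among the remaining vertices. A vertex pruned because its degree
  equals its capacity therefore has only planted edges, so it does not lie on an alternating
  circuit, where every vertex also has an unplanted edge. A circuit vertex adjacent to the pruned
  vertex has a second planted neighbour on the circuit, so its capacity does not drop to 0.
  Hence all vertices of the circuit survive into the core, and with them all its edges.\<close>

lemma simple_graph_on_edgeD:
  assumes "simple_graph_on n G" and "{a, b} \<in> G"
  shows "a \<noteq> b" and "a \<in> {1..n}" and "b \<in> {1..n}"
  using assms unfolding simple_graph_on_def by (metis doubleton_eq_iff)+

lemma walk_edge_subset_set:
  assumes "i < length xs"
  shows "walk_edge xs i \<subseteq> set xs"
proof -
  have "length xs > 0"
    using assms by linarith
  then have "Suc i mod length xs < length xs"
    by simp
  with assms show ?thesis
    unfolding walk_edge_def by simp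
qed

definition planted_degree :: "nat set set \<Rightarrow> nat set \<Rightarrow> nat \<Rightarrow> nat" where
  "planted_degree H V u = card {w\<in>V. {u, w} \<in> H}"

lemma card_incident_edges_eq_planted_degree:
  assumes "simple_graph_on n H"
  shows "card {e\<in>H. u \<in> e} = planted_degree H {1..n} u"
proof -
  let ?N = "{w\<in>{1..n}. {u, w} \<in> H}"
  have inj: "inj_on (\<lambda>w. {u, w}) ?N"
    using simple_graph_on_edgeD(1)[OF assms] by (intro inj_onI) (metis doubleton_eq_iff)
  have image: "(\<lambda>w. {u, w}) ` ?N = {e\<in>H. u \<in> e}"
  proof
    show "{e\<in>H. u \<in> e} \<subseteq> (\<lambda>w. {u, w}) ` ?N"
    proof
      fix e assume e: "e \<in> {e\<in>H. u \<in> e}"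
      then obtain a b where ab: "e = {a, b}" "a \<in> {1..n}" "b \<in> {1..n}"
        using assms unfolding simple_graph_on_def by blast
      with e obtain w where "e = {u, w}" "w \<in> {1..n}"
        by (metis empty_iff insertE insert_commute mem_Collect_eq)
      with e show "e \<in> (\<lambda>w. {u, w}) ` ?N"
        by blast
    qed
  qed auto
  show ?thesis
    unfolding planted_degree_def using card_image[OF inj] image by simp
qed

definition planted_capacities :: "nat set set \<Rightarrow> nat set \<times> (nat \<Rightarrow> nat) \<Rightarrow> bool" where
  "planted_capacities H S \<longleftrightarrow>
     finite (fst S) \<and> (\<forall>u\<in>fst S. snd S u = planted_degree H (fst S) u)"

definition bicoloured :: "nat set set \<Rightarrow> nat set set \<Rightarrow> nat set \<Rightarrow> bool" where
  "bicoloured G H X \<longleftrightarrow> (\<forall>x\<in>X. (\<exists>u\<in>X. {x, u} \<in> H) \<and> (\<exists>y\<in>X. {x, y} \<in> G - H))"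

lemma alternating_circuit_bicoloured:
  assumes ac: "alternating_circuit G H xs"
  shows "bicoloured G H (set xs)"
  unfolding bicoloured_def
proof
  fix x assume "x \<in> set xs"
  then obtain j where j: "j < length xs" "xs ! j = x" by (metis in_set_conv_nth)
  define m where "m = length xs"
  define p where "p = (j + m - 1) mod m"
  have m_pos: "m > 0"
    using j(1) m_def by linarith
  then have p: "p < m" and next_p: "Suc p mod m = j"
    using j by (simp_all add: p_def m_def mod_Suc_eq)
  have in_edge: "walk_edge xs p = {x, xs ! p}" and out_edge: "walk_edge xs j = {x, xs ! (Suc j mod m)}"
    unfolding walk_edge_def using j next_p m_def by auto
  have neighbours: "xs ! p \<in> set xs" "xs ! (Suc j mod m) \<in> set xs"
    using p m_pos m_def by simp_all
  have "{x, xs ! p} \<in> G" "{x, xs ! (Suc j mod m)} \<in> G"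
    and "{x, xs ! p} \<in> H \<longleftrightarrow> {x, xs ! (Suc j mod m)} \<notin> H"
    using ac p j next_p in_edge out_edge unfolding alternating_circuit_def m_def by metis+
  with neighbours show "(\<exists>u\<in>set xs. {x, u} \<in> H) \<and> (\<exists>y\<in>set xs. {x, y} \<in> G - H)"
    by (metis DiffI)
qed

locale prune_step_at =
  fixes G H :: "nat set set" and V V' :: "nat set" and cap cap' :: "nat \<Rightarrow> nat" and v :: nat
  assumes planted_subgraph: "H \<subseteq> G"
    and capacities: "planted_capacities H (V, cap)"
    and v_in: "v \<in> V"
    and degree_eq_capacity: "cur_deg G V v = cap v"
    and cap'_eq: "cap' = (\<lambda>u. if u \<in> V - {v} \<and> {v, u} \<in> G then cap u - 1 else cap u)"
    and V'_eq: "V' = (V - {v}) - {u\<in>V - {v}. {v, u} \<in> G \<and> cap' u = 0}"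
begin

lemma finite_V: "finite V"
  using capacities unfolding planted_capacities_def by simp

lemma cap_eq: "u \<in> V \<Longrightarrow> cap u = card {w\<in>V. {u, w} \<in> H}"
  using capacities unfolding planted_capacities_def planted_degree_def by simp

lemma pruned_edges_planted:
  assumes "w \<in> V" and "{v, w} \<in> G"
  shows "{v, w} \<in> H"
proof -
  have "{w\<in>V. {v, w} \<in> H} \<subseteq> {w\<in>V. {v, w} \<in> G}"
    using planted_subgraph by auto
  moreover have "card {w\<in>V. {v, w} \<in> H} = card {w\<in>V. {v, w} \<in> G}"
    using degree_eq_capacity cap_eq[OF v_in] unfolding cur_deg_def by simp
  ultimately have "{w\<in>V. {v, w} \<in> H} = {w\<in>V. {v, w} \<in> G}"
    using finite_V by (simp add: card_subset_eq)
  with assms show ?thesis by blast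
qed

lemma survives:
  assumes w: "w \<in> V" "w \<noteq> v" and u: "u \<in> V" "u \<noteq> v" and wu: "{w, u} \<in> H"
  shows "w \<in> V'"
proof -
  have "cap' w \<noteq> 0" if vw: "{v, w} \<in> G"
  proof -
    have "{w, v} \<in> H"
      using pruned_edges_planted[OF w(1) vw] by (simp add: insert_commute)
    then have "{v, u} \<subseteq> {x\<in>V. {w, x} \<in> H}"
      using v_in u wu by auto
    then have "card {v, u} \<le> cap w"
      using cap_eq[OF w(1)] finite_V by (simp add: card_mono)
    with u vw w show ?thesis
      unfolding cap'_eq by simp
  qed
  with w show ?thesis
    unfolding V'_eq by blast
qed

lemma planted_capacities_after: "planted_capacities H (V', cap')"
  unfolding planted_capacities_def planted_degree_def
proof (intro conjI ballI, simp_all)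
  show "finite V'"
    using finite_V V'_eq by simp
  fix u assume "u \<in> V'"
  then have u: "u \<in> V" "u \<noteq> v"
    using V'_eq by auto
  have "{w\<in>V'. {u, w} \<in> H} = {w\<in>V. {u, w} \<in> H} - {v}"
  proof
    show "{w\<in>V'. {u, w} \<in> H} \<subseteq> {w\<in>V. {u, w} \<in> H} - {v}"
      using V'_eq by auto
    show "{w\<in>V. {u, w} \<in> H} - {v} \<subseteq> {w\<in>V'. {u, w} \<in> H}"
    proof
      fix w assume w: "w \<in> {w\<in>V. {u, w} \<in> H} - {v}"
      then have "{w, u} \<in> H"
        by (simp add: insert_commute)
      with w u survives show "w \<in> {w\<in>V'. {u, w} \<in> H}"
        by blast
    qed
  qed
  moreover have "{u, v} \<in> H \<longleftrightarrow> {v, u} \<in> G"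
    using pruned_edges_planted[OF u(1)] planted_subgraph by (auto simp: insert_commute)
  ultimately show "cap' u = card {w\<in>V'. {u, w} \<in> H}"
    using u cap_eq[OF u(1)] v_in finite_V unfolding cap'_eq by auto
qed

lemma bicoloured_survives:
  assumes "bicoloured G H X" and "X \<subseteq> V"
  shows "X \<subseteq> V'"
proof -
  have "v \<notin> X"
  proof
    assume "v \<in> X"
    then obtain y where "y \<in> X" "{v, y} \<in> G - H"
      using assms(1) unfolding bicoloured_def by blast
    with assms(2) pruned_edges_planted show False by blast
  qed
  show ?thesis
  proof
    fix x assume x: "x \<in> X"
    then obtain u where "u \<in> X" "{x, u} \<in> H"
      using assms(1) unfolding bicoloured_def by blast
    with x \<open>v \<notin> X\<close> assms(2) survives show "x \<in> V'"
      by blast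
  qed
qed

end

lemma prune_run_keeps_bicoloured:
  assumes planted_subgraph: "H \<subseteq> G"
    and run: "(prune_step G)\<^sup>*\<^sup>* S\<^sub>0 S"
    and init: "planted_capacities H S\<^sub>0" "X \<subseteq> fst S\<^sub>0"
    and bic: "bicoloured G H X"
  shows "X \<subseteq> fst S"
proof -
  from run init have "planted_capacities H S \<and> X \<subseteq> fst S"
  proof (induction rule: rtranclp_induct)
    case (step S S')
    from step.hyps(2) show ?case
    proof cases
      case (1 v V cap cap' V')
      then interpret prune_step_at G H V V' cap cap' v
        using step.IH step.prems planted_subgraph by unfold_locales auto
      show ?thesis
        using 1 step.IH step.prems planted_capacities_after bicoloured_survives[OF bic] by simp
    qed
  qed simp
  then show ?thesis by simp
qed

theorem mainTheorem14:
  fixes n k :: nat and G H :: "nat set set" and e :: "nat set"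
  assumes "k_factor n k H"
    and "simple_graph_on n G"
    and "H \<subseteq> G"
    and "e \<in> H"
    and "alternating_circuit G H xs"
    and "\<exists>i<length xs. walk_edge xs i = e"
    and "(prune_step G)\<^sup>*\<^sup>* ({1..n}, \<lambda>_. k) S"
    and "prune_terminal G S"
  shows "e \<in> core_edges G (fst S)"
proof -
  have bic: "bicoloured G H (set xs)"
    using alternating_circuit_bicoloured[OF assms(5)] .
  then have "set xs \<subseteq> {1..n}"
    using simple_graph_on_edgeD(2)[OF assms(2)] unfolding bicoloured_def by blast
  moreover have "planted_capacities H ({1..n}, \<lambda>_. k)"
    using assms(1) card_incident_edges_eq_planted_degree[of n H]
    unfolding planted_capacities_def k_factor_def by simp
  ultimately have "set xs \<subseteq> fst S"
    using prune_run_keeps_bicoloured[OF assms(3,7) _ _ bic] by simp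
  moreover have "e \<subseteq> set xs"
    using assms(6) walk_edge_subset_set by blast
  ultimately show ?thesis
    using assms(3,4) unfolding core_edges_def by blast
qed

end
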